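(* Let $\mathscr{A}$ be a finite alphabet, let $\Xi\subseteq\mathscr{A}^{\mathbb{Z}}$ be a periodically approximable subshift and let $(\Xi_k)_k$ be a sequence of periodic subshifts converging to $\Xi$. If $\Xi$ contains a non-periodic element, then the period $q_k=\#\Xi_k$ tends to infinity as $k\to\infty$.
   Context: $\mathscr{A}^{\mathbb{Z}}$ has the product topology and shift $(T\xi)(j)=\xi(j-1)$; a subshift is a non-empty closed $T$-invariant subset, and the set of subshifts carries the Hausdorff (Vietoris) topology (basis: $\{\Xi:\Xi\cap F=\emptyset,\Xi\cap O\neq\emptyset\ \forall O\in\mathcal{F}\}$, $F$ closed, $\mathcal{F}$ a finite family of open sets). $\eta$ is periodic if $T^n\eta=\eta$ for some $n\geq1$; a periodic subshift is $\mathrm{Orb}(\eta)=\{T^n\eta:n\in\mathbb{Z}\}$ for a periodic $\eta$. $\Xi$ is periodically approximable if some sequence of periodic subshifts converges to it. *)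

theory Defs
  imports "HOL-Analysis.Analysis"
begin

definition fullshift_top :: "(int \<Rightarrow> 'a) topology" where
  "fullshift_top = product_topology (\<lambda>_::int. discrete_topology (UNIV::'a set)) UNIV"

definition shiftT :: "(int \<Rightarrow> 'a) \<Rightarrow> (int \<Rightarrow> 'a)" where
  "shiftT \<xi> = (\<lambda>j. \<xi> (j - 1))"

definition subshift :: "(int \<Rightarrow> 'a) set \<Rightarrow> bool" where
  "subshift \<Xi> \<longleftrightarrow> \<Xi> \<noteq> {} \<and> closedin fullshift_top \<Xi> \<and> shiftT ` \<Xi> = \<Xi>"

definition periodic :: "(int \<Rightarrow> 'a) \<Rightarrow> bool" where
  "periodic \<eta> \<longleftrightarrow> (\<exists>n::nat. n \<ge> 1 \<and> (shiftT ^^ n) \<eta> = \<eta>)"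

text \<open>Orbit over all integer powers; T^n \<eta> = (\<lambda>j. \<eta> (j - n)) for n in Z.\<close>
definition Orb :: "(int \<Rightarrow> 'a) \<Rightarrow> (int \<Rightarrow> 'a) set" where
  "Orb \<eta> = {(\<lambda>j. \<eta> (j - n)) | n::int. True}"

definition periodic_subshift :: "(int \<Rightarrow> 'a) set \<Rightarrow> bool" where
  "periodic_subshift \<Xi> \<longleftrightarrow> (\<exists>\<eta>. periodic \<eta> \<and> \<Xi> = Orb \<eta>)"

text \<open>Convergence of a sequence of subshifts in the Hausdorff (Vietoris) topology,
 expressed through the given basis.\<close>
definition vietoris_converges :: "(nat \<Rightarrow> (int \<Rightarrow> 'a) set) \<Rightarrow> (int \<Rightarrow> 'a) set \<Rightarrow> bool" where
  "vietoris_converges Xs \<Xi> \<longleftrightarrow>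
    (\<forall>F \<F>. closedin fullshift_top F \<and> finite \<F> \<and> (\<forall>U\<in>\<F>. openin fullshift_top U)
       \<and> \<Xi> \<inter> F = {} \<and> (\<forall>U\<in>\<F>. \<Xi> \<inter> U \<noteq> {})
       \<longrightarrow> (\<forall>\<^sub>F k in sequentially. Xs k \<inter> F = {} \<and> (\<forall>U\<in>\<F>. Xs k \<inter> U \<noteq> {})))"

definition periodically_approximable :: "(int \<Rightarrow> 'a) set \<Rightarrow> bool" where
  "periodically_approximable \<Xi> \<longleftrightarrow>
     (\<exists>Xs. (\<forall>k. periodic_subshift (Xs k)) \<and> vietoris_converges Xs \<Xi>)"

end

theory Submission
  imports Defs
begin

text \<open>A periodic subshift with at most \<open>N\<close> elements consists of configurations of period at
  most \<open>N\<close>, hence all of period \<open>N!\<close>. A non-periodic \<open>\<xi> \<in> \<Xi>\<close> differs from its \<open>N!\<close>-shift at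
  some site, and the cylinder fixing \<open>\<xi>\<close> at the two sites involved is an open set that every
  subshift close to \<open>\<Xi>\<close> must meet; so close to \<open>\<Xi>\<close> there are no periodic subshifts with at
  most \<open>N\<close> elements.\<close>

lemma funpow_shiftT: "(shiftT ^^ n) \<eta> = (\<lambda>j. \<eta> (j - int n))"
  by (induction n) (auto simp: shiftT_def algebra_simps)

lemma periodic_multiple_nat:
  fixes \<eta> :: "int \<Rightarrow> 'a"
  assumes "\<And>x. \<eta> (x - d) = \<eta> x"
  shows "\<eta> (x - d * int c) = \<eta> x"
proof (induction c arbitrary: x)
  case (Suc c)
  have "\<eta> (x - d * int (Suc c)) = \<eta> ((x - d * int c) - d)"
    by (simp add: algebra_simps)
  also have "\<dots> = \<eta> x"
    using assms Suc.IH by simp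
  finally show ?case .
qed simp

lemma periodic_multiple:
  fixes \<eta> :: "int \<Rightarrow> 'a"
  assumes "\<And>x. \<eta> (x - d) = \<eta> x"
  shows "\<eta> (x - d * c) = \<eta> x"
proof (cases "c \<ge> 0")
  case True
  then obtain m where "c = int m"
    using nonneg_int_cases by blast
  then show ?thesis
    using periodic_multiple_nat[where \<eta> = \<eta> and d = d, OF assms] by simp
next
  case False
  define m where "m = nat (- c)"
  have "\<eta> (x - d * c) = \<eta> (x + d * int m)"
    using False unfolding m_def by simp
  also have "\<dots> = \<eta> ((x + d * int m) - d * int m)"
    using periodic_multiple_nat[where \<eta> = \<eta> and d = d, OF assms] by (rule sym)
  also have "\<dots> = \<eta> x"
    by simp
  finally show ?thesis .
qed

lemma finite_Orb:
  assumes "periodic \<eta>"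
  shows "finite (Orb \<eta>)"
proof -
  obtain n where n: "n \<ge> 1" "(shiftT ^^ n) \<eta> = \<eta>"
    using assms periodic_def by blast
  have period: "\<eta> (x - int n) = \<eta> x" for x
    using fun_cong[OF n(2), of x] by (simp add: funpow_shiftT)
  have "Orb \<eta> \<subseteq> (\<lambda>i j. \<eta> (j - i)) ` {0..<int n}"
  proof
    fix \<zeta> assume "\<zeta> \<in> Orb \<eta>"
    then obtain m where \<zeta>: "\<zeta> = (\<lambda>j. \<eta> (j - m))"
      unfolding Orb_def by blast
    have "\<eta> (j - m) = \<eta> (j - m mod int n)" for j
    proof -
      have "\<eta> (j - m) = \<eta> ((j - m mod int n) - int n * (m div int n))"
        by (metis diff_diff_eq mult_div_mod_eq add.commute)
      also have "\<dots> = \<eta> (j - m mod int n)"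
        using periodic_multiple[of \<eta> "int n", OF period] .
      finally show ?thesis .
    qed
    then have "\<zeta> = (\<lambda>j. \<eta> (j - m mod int n))"
      using \<zeta> by simp
    moreover have "m mod int n \<in> {0..<int n}"
      using n(1) by simp
    ultimately show "\<zeta> \<in> (\<lambda>i j. \<eta> (j - i)) ` {0..<int n}"
      by blast
  qed
  then show ?thesis
    using finite_subset by blast
qed

lemma card_Orb_le_imp_period:
  assumes "periodic \<eta>" and "card (Orb \<eta>) \<le> N"
  shows "\<exists>d. 1 \<le> d \<and> d \<le> N \<and> (\<forall>x. \<eta> (x - int d) = \<eta> x)"
proof -
  let ?shift = "\<lambda>i::nat. (\<lambda>j. \<eta> (j - int i))"
  have "\<not> inj_on ?shift {0..N}"
  proof
    assume "inj_on ?shift {0..N}"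
    then have "card (?shift ` {0..N}) = N + 1"
      by (simp add: card_image)
    moreover have "?shift ` {0..N} \<subseteq> Orb \<eta>"
      unfolding Orb_def by blast
    then have "card (?shift ` {0..N}) \<le> card (Orb \<eta>)"
      by (rule card_mono[OF finite_Orb[OF assms(1)]])
    ultimately show False
      using assms(2) by simp
  qed
  then obtain i i' where i: "i \<in> {0..N}" "i' \<in> {0..N}" "i < i'" "?shift i = ?shift i'"
    unfolding inj_on_def by (metis linorder_neqE_nat)
  have "\<eta> (x - int (i' - i)) = \<eta> x" for x
  proof -
    have "x - int (i' - i) = (x + int i) - int i'"
      using i(3) by (simp add: of_nat_diff)
    then have "\<eta> (x - int (i' - i)) = \<eta> ((x + int i) - int i')"
      by (rule arg_cong)
    also have "\<dots> = \<eta> ((x + int i) - int i)"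
      using fun_cong[OF i(4), of "x + int i"] by (rule sym)
    finally show ?thesis
      by simp
  qed
  moreover have "1 \<le> i' - i" "i' - i \<le> N"
    using i by auto
  ultimately show ?thesis
    by blast
qed

lemma card_Orb_le_imp_fact_period:
  assumes "periodic \<eta>" and "card (Orb \<eta>) \<le> N" and "\<zeta> \<in> Orb \<eta>"
  shows "\<zeta> (x - int (fact N)) = \<zeta> x"
proof -
  obtain d where d: "1 \<le> d" "d \<le> N" "\<And>x. \<eta> (x - int d) = \<eta> x"
    using card_Orb_le_imp_period[OF assms(1,2)] by blast
  have "d dvd fact N"
    using d(1,2) by (rule dvd_fact)
  then obtain c where c: "fact N = d * c" ..
  obtain m where \<zeta>: "\<zeta> = (\<lambda>j. \<eta> (j - m))"
    using assms(3) unfolding Orb_def by blast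
  have "\<eta> ((x - m) - int d * int c) = \<eta> (x - m)"
    using periodic_multiple[of \<eta> "int d", OF d(3)] .
  then show ?thesis
    using \<zeta> c by (simp add: algebra_simps)
qed

lemma openin_fullshift_cylinder: "openin fullshift_top {\<eta>. \<eta> j = a}"
proof -
  have "continuous_map fullshift_top (discrete_topology UNIV) (\<lambda>\<eta>. \<eta> j)"
    unfolding fullshift_top_def by (rule continuous_map_product_projection) simp
  then have "openin fullshift_top {\<eta> \<in> topspace fullshift_top. \<eta> j \<in> {a}}"
    by (rule openin_continuous_map_preimage) simp
  then show ?thesis
    by (simp add: fullshift_top_def topspace_product_topology)
qed

lemma vietoris_converges_eventually_meets:
  assumes "vietoris_converges Xs \<Xi>" and "openin fullshift_top U" and "\<Xi> \<inter> U \<noteq> {}"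
  shows "\<forall>\<^sub>F k in sequentially. Xs k \<inter> U \<noteq> {}"
proof -
  have "closedin fullshift_top {}" "finite {U}" "\<forall>V\<in>{U}. openin fullshift_top V"
    "\<Xi> \<inter> {} = {}" "\<forall>V\<in>{U}. \<Xi> \<inter> V \<noteq> {}"
    using assms(2,3) by simp_all
  then have "\<forall>\<^sub>F k in sequentially. Xs k \<inter> {} = {} \<and> (\<forall>V\<in>{U}. Xs k \<inter> V \<noteq> {})"
    using assms(1) unfolding vietoris_converges_def by blast
  then show ?thesis
    by (rule eventually_mono) simp
qed

lemma nonperiodic_limit_imp_card_eventually_gt:
  assumes "vietoris_converges Xs \<Xi>" and "\<forall>k. periodic_subshift (Xs k)"
    and "\<xi> \<in> \<Xi>" and "\<not> periodic \<xi>"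
  shows "\<forall>\<^sub>F k in sequentially. N < card (Xs k)"
proof -
  define M where "M = int (fact N)"
  have "(shiftT ^^ fact N) \<xi> \<noteq> \<xi>"
    using assms(4) fact_ge_1 unfolding periodic_def by blast
  then obtain j where j: "\<xi> (j - M) \<noteq> \<xi> j"
    unfolding funpow_shiftT M_def by fastforce
  define U where "U = {\<eta>. \<eta> j = \<xi> j} \<inter> {\<eta>. \<eta> (j - M) = \<xi> (j - M)}"
  have "openin fullshift_top U"
    unfolding U_def by (intro openin_Int openin_fullshift_cylinder)
  moreover have "\<xi> \<in> \<Xi> \<inter> U"
    using assms(3) unfolding U_def by simp
  ultimately have "\<forall>\<^sub>F k in sequentially. Xs k \<inter> U \<noteq> {}"
    using vietoris_converges_eventually_meets[OF assms(1)] by blast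
  moreover have "N < card (Xs k)" if meets: "Xs k \<inter> U \<noteq> {}" for k
  proof (rule ccontr)
    assume "\<not> N < card (Xs k)"
    obtain \<eta> where \<eta>: "periodic \<eta>" "Xs k = Orb \<eta>"
      using assms(2) periodic_subshift_def by blast
    obtain \<zeta> where \<zeta>: "\<zeta> \<in> Xs k" "\<zeta> \<in> U"
      using meets by blast
    have "card (Orb \<eta>) \<le> N" "\<zeta> \<in> Orb \<eta>"
      using \<open>\<not> N < card (Xs k)\<close> \<zeta>(1) \<eta>(2) by simp_all
    then have "\<zeta> (j - M) = \<zeta> j"
      unfolding M_def by (rule card_Orb_le_imp_fact_period[OF \<eta>(1)])
    then show False
      using j \<zeta>(2) unfolding U_def by auto
  qed
  ultimately show ?thesis
    by (rule eventually_mono)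
qed

theorem corollary5:
  fixes \<Xi> :: "(int \<Rightarrow> 'a::finite) set" and Xs :: "nat \<Rightarrow> (int \<Rightarrow> 'a) set"
  assumes "subshift \<Xi>"
    and "periodically_approximable \<Xi>"
    and "\<forall>k. periodic_subshift (Xs k)"
    and "vietoris_converges Xs \<Xi>"
    and "\<exists>\<xi>\<in>\<Xi>. \<not> periodic \<xi>"
  shows "filterlim (\<lambda>k. card (Xs k)) at_top sequentially"
proof -
  obtain \<xi> where "\<xi> \<in> \<Xi>" "\<not> periodic \<xi>"
    using assms(5) by blast
  then have "\<forall>\<^sub>F k in sequentially. N < card (Xs k)" for N
    using nonperiodic_limit_imp_card_eventually_gt[OF assms(4,3)] by blast
  then show ?thesis
    unfolding filterlim_at_top by (metis (mono_tags) eventually_mono less_imp_le)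
qed

end
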